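(* Let $0<\theta\le 3/4$ and $f(x)=\log\frac{\cosh(x/2)+\theta\sinh(x/2)}{\cosh(x/2)-\theta\sinh(x/2)}$. Then $|f(x)-f(y)|\le 2f(|x-y|/2)$ for all $x,y\in\mathbb R$. Moreover, there exists a universal constant $\kappa>1/100$ (independent of $\theta$) such that for all constants $C_1,C_2\ge1$ with $C_2\ge1+(\tfrac12C_1-1)(1-\theta^2)$ and all $\delta>0$, $$f(\delta)\big(1+4\kappa(1-\theta)C_1\,\delta\tanh(\delta/2)\big)\le C_2\,\theta\,\delta.$$ *)

theory Defs
  imports Complex_Main
begin

definition fth :: "real \<Rightarrow> real \<Rightarrow> real" where
  "fth \<theta> x = ln ((cosh (x/2) + \<theta> * sinh (x/2)) / (cosh (x/2) - \<theta> * sinh (x/2)))"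

end

theory Submission
  imports Defs
begin

(* First claim, |f x - f y| <= 2 f(|x-y|/2): writing f(x) = ln(mobius \<theta> (e^x)) with a
   Moebius map, the claim reduces to the polynomial inequality
   mobius(u Z^2) <= mobius(Z)^2 mobius(u) for u > 0, Z >= 1, whose cross-multiplied form
   factors into a manifestly nonnegative product.

   Second claim: writing f(\<delta>) = 2 artanh(\<theta> s) and \<delta> = 2 artanh(s) with s = tanh(\<delta>/2), the
   key estimate is artanh(\<theta> s) (1 + K s artanh s) <= \<theta> artanh s for 3K <= 1 - \<theta>^2, proved
   by a derivative argument.  With K = (1-\<theta>)/3 it is the claim for C1 = 2, C2 = 1; a bound
   on the correction term valid for \<theta> <= 3/4 then lets one interpolate to all admissible
   C1, C2.  The constant \<kappa> = 1/48 > 1/100 works uniformly in \<theta>. *)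

definition mobius :: "real \<Rightarrow> real \<Rightarrow> real" where
  "mobius \<theta> X = ((1 + \<theta>) * X + (1 - \<theta>)) / ((1 - \<theta>) * X + (1 + \<theta>))"

(* Clearing the factor 2 exp(x/2) from numerator and denominator of the defining quotient. *)
lemma fth_eq_ln_mobius: "fth \<theta> x = ln (mobius \<theta> (exp x))"
proof -
  have exp_split: "exp x = exp (x/2) * exp (x/2)" and exp_inv: "exp (x/2) * exp (-(x/2)) = 1"
    by (simp_all flip: exp_add)
  have "(cosh (x/2) + \<theta> * sinh (x/2)) / (cosh (x/2) - \<theta> * sinh (x/2))
      = ((cosh (x/2) + \<theta> * sinh (x/2)) * (2 * exp (x/2))) /
        ((cosh (x/2) - \<theta> * sinh (x/2)) * (2 * exp (x/2)))"
    by simp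
  also have "\<dots> = mobius \<theta> (exp x)"
    unfolding mobius_def cosh_def sinh_def exp_split using exp_inv by (simp add: algebra_simps)
  finally show ?thesis unfolding fth_def by simp
qed

lemma mobius_pos: "0 < \<theta> \<Longrightarrow> \<theta> < 1 \<Longrightarrow> 0 < X \<Longrightarrow> 0 < mobius \<theta> X"
  unfolding mobius_def by (intro divide_pos_pos add_pos_pos mult_pos_pos) auto

lemma mobius_mono:
  assumes "0 < \<theta>" "\<theta> < 1" "0 < Y" "Y \<le> X"
  shows "mobius \<theta> Y \<le> mobius \<theta> X"
proof -
  define nX nY dX dY where "nX = (1+\<theta>)*X + (1-\<theta>)" and "nY = (1+\<theta>)*Y + (1-\<theta>)"
    and "dX = (1-\<theta>)*X + (1+\<theta>)" and "dY = (1-\<theta>)*Y + (1+\<theta>)"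
  have "nX * dY - nY * dX = 4 * \<theta> * (X - Y)"
    unfolding nX_def nY_def dX_def dY_def by (simp add: algebra_simps)
  moreover have "0 \<le> 4 * \<theta> * (X - Y)" using assms by simp
  ultimately have cross: "nY * dX \<le> nX * dY" by linarith
  have "0 < dX" "0 < dY" unfolding dX_def dY_def using assms by (auto intro!: add_nonneg_pos)
  with cross have "nY / dY \<le> nX / dX" by (simp add: frac_le_eq divide_nonpos_pos)
  thus ?thesis unfolding mobius_def nX_def nY_def dX_def dY_def .
qed

lemma mobius_ge_1: "0 < \<theta> \<Longrightarrow> \<theta> < 1 \<Longrightarrow> 1 \<le> X \<Longrightarrow> 1 \<le> mobius \<theta> X"
  using mobius_mono[of \<theta> 1 X] by (simp add: mobius_def)

(* The algebraic heart of the first claim: the cross-multiplied difference factors as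
   ab(a^2-b^2)(Z^2-1)(uZ-1)^2 with a = 1+\<theta>, b = 1-\<theta>, hence is nonnegative. *)
lemma mobius_submult:
  assumes "0 < \<theta>" "\<theta> < 1" "0 < u" "1 \<le> Z"
  shows "mobius \<theta> (u * Z^2) \<le> (mobius \<theta> Z)^2 * mobius \<theta> u"
proof -
  define a b where "a = 1 + \<theta>" and "b = 1 - \<theta>"
  have ab: "b < a" "0 < b" using assms by (auto simp: a_def b_def)
  have dens: "0 < b*u + a" "0 < b*(u*Z^2) + a" "0 < b*Z + a"
    using ab assms by (auto intro!: add_nonneg_pos)
  have "(a*Z + b)^2 * (a*u + b) * (b*(u*Z^2) + a) - (a*(u*Z^2) + b) * (b*Z + a)^2 * (b*u + a)
      = a * b * (a*a - b*b) * (Z*Z - 1) * (u*Z - 1)^2"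
    by (simp add: algebra_simps power2_eq_square)
  moreover have "0 \<le> a * b * (a*a - b*b) * (Z*Z - 1) * (u*Z - 1)^2"
    using ab assms mult_mono[of 1 Z 1 Z] mult_strict_mono[of b a b a]
    by (intro mult_nonneg_nonneg) auto
  ultimately have "(a*(u*Z^2) + b) * (b*Z + a)^2 * (b*u + a) \<le> (a*Z + b)^2 * (a*u + b) * (b*(u*Z^2) + a)"
    by linarith
  with dens show ?thesis
    unfolding mobius_def a_def[symmetric] b_def[symmetric]
    by (simp add: divide_simps power2_eq_square mult.commute mult.left_commute)
qed

(* First claim: taking logarithms in mobius_submult with e^y = u, e^((x-y)/2) = Z gives
   f x - f y <= 2 f((x-y)/2) for y <= x; monotonicity of f disposes of the absolute value. *)
lemma fth_difference_bound:
  assumes "0 < \<theta>" "\<theta> < 1"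
  shows "\<bar>fth \<theta> x - fth \<theta> y\<bar> \<le> 2 * fth \<theta> (\<bar>x - y\<bar> / 2)"
proof -
  have ordered: "\<bar>fth \<theta> x - fth \<theta> y\<bar> \<le> 2 * fth \<theta> (\<bar>x - y\<bar> / 2)" if "y \<le> x" for x y
  proof -
    define u Z where "u = exp y" and "Z = exp ((x - y) / 2)"
    have u: "0 < u" and Z: "1 \<le> Z" using that by (simp_all add: u_def Z_def)
    have "exp x = u * Z^2"
      unfolding u_def Z_def by (simp flip: exp_add exp_of_nat_mult add: power2_eq_square)
    hence fx: "fth \<theta> x = ln (mobius \<theta> (u * Z^2))" by (simp add: fth_eq_ln_mobius)
    have fy: "fth \<theta> y = ln (mobius \<theta> u)" by (simp add: fth_eq_ln_mobius u_def)
    have fz: "fth \<theta> (\<bar>x - y\<bar> / 2) = ln (mobius \<theta> Z)"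
      using that by (simp add: fth_eq_ln_mobius Z_def)
    have Mu: "0 < mobius \<theta> u" and MZ: "1 \<le> mobius \<theta> Z" and MX: "0 < mobius \<theta> (u * Z^2)"
      using mobius_pos mobius_ge_1 assms u Z by auto
    have "ln (mobius \<theta> (u * Z^2)) \<le> ln ((mobius \<theta> Z)^2 * mobius \<theta> u)"
      using mobius_submult[OF assms u Z] MX by simp
    also have "\<dots> = 2 * ln (mobius \<theta> Z) + ln (mobius \<theta> u)"
      using MZ Mu by (simp add: ln_mult ln_realpow)
    finally have upper: "fth \<theta> x - fth \<theta> y \<le> 2 * fth \<theta> (\<bar>x - y\<bar> / 2)"
      using fx fy fz by simp
    have "u \<le> u * Z^2" using u Z by (simp add: one_le_power)
    hence "mobius \<theta> u \<le> mobius \<theta> (u * Z^2)" using mobius_mono[OF assms u] by blast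
    hence "fth \<theta> y \<le> fth \<theta> x" using fx fy Mu by simp
    moreover have "0 \<le> fth \<theta> (\<bar>x - y\<bar> / 2)" using fz MZ by simp
    ultimately show ?thesis using upper by linarith
  qed
  show ?thesis
    using ordered[of y x] ordered[of x y] by (cases "y \<le> x") (auto simp: abs_minus_commute)
qed

(* Dividing by cosh(x/2): f(x) = 2 artanh(\<theta> tanh(x/2)).  Since also x = 2 artanh(tanh(x/2)),
   the second claim becomes an inequality between artanh(s) and artanh(\<theta> s). *)
lemma fth_eq_artanh: "fth \<theta> x = 2 * artanh (\<theta> * tanh (x/2))"
proof -
  have c: "cosh (x/2) \<noteq> 0" using cosh_real_pos[of "x/2"] by simp
  have "1 + \<theta> * tanh (x/2) = (cosh (x/2) + \<theta> * sinh (x/2)) / cosh (x/2)"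
    and "1 - \<theta> * tanh (x/2) = (cosh (x/2) - \<theta> * sinh (x/2)) / cosh (x/2)"
    using c by (simp_all add: tanh_def field_simps)
  hence "(1 + \<theta> * tanh (x/2)) / (1 - \<theta> * tanh (x/2))
       = (cosh (x/2) + \<theta> * sinh (x/2)) / (cosh (x/2) - \<theta> * sinh (x/2))"
    using c by simp
  thus ?thesis by (simp add: fth_def artanh_def)
qed

(* Elementary bounds 0 <= artanh s <= s/(1-s^2) on [0,1); the upper one by monotonicity of the
   difference, whose derivative is 2s^2/(1-s^2)^2. *)
lemma artanh_nonneg: "0 \<le> (s::real) \<Longrightarrow> s < 1 \<Longrightarrow> 0 \<le> artanh s"
  by (simp add: artanh_def)

lemma artanh_le: assumes "0 \<le> (s::real)" "s < 1" shows "artanh s \<le> s / (1 - s^2)"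
proof -
  define g where "g x = x / (1 - x^2) - artanh x" for x :: real
  have "g 0 \<le> g s"
  proof (rule DERIV_nonneg_imp_nondecreasing[OF assms(1)])
    fix x assume x: "0 \<le> x" "x \<le> s"
    hence "\<bar>x\<bar> < 1" using assms by auto
    define d where "d = 1 - x^2"
    have "0 < d" unfolding d_def using \<open>\<bar>x\<bar> < 1\<close> by (simp add: abs_square_less_1)
    have "(g has_real_derivative (d + x * (2 * x)) / (d * d) - 1 / d) (at x)"
      unfolding g_def[abs_def] d_def using \<open>\<bar>x\<bar> < 1\<close> \<open>0 < d\<close>[unfolded d_def]
      by (auto intro!: derivative_eq_intros)
    moreover have "(d + x * (2 * x)) / (d * d) - 1 / d = 2 * x^2 / d^2"
      using \<open>0 < d\<close> by (simp add: field_simps power2_eq_square)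
    ultimately show "\<exists>y. (g has_real_derivative y) (at x) \<and> 0 \<le> y" by force
  qed
  thus ?thesis by (simp add: g_def)
qed

(* Derivative estimate for the core inequality: with A = artanh, the derivative of
   \<theta> A(x) - A(\<theta> x) - K x A(x) A(\<theta> x) is nonnegative, because \<theta>/(1-x^2) - \<theta>/(1-\<theta>^2 x^2)
   = \<theta>(1-\<theta>^2) c with c = x^2/((1-x^2)(1-\<theta>^2x^2)), while each of the three product-rule
   terms is at most \<theta> c by the upper bound on artanh. *)
lemma artanh_product_gap:
  fixes \<theta> K x :: real
  assumes \<theta>: "0 \<le> \<theta>" "\<theta> \<le> 1" and K: "0 \<le> K" "3 * K \<le> 1 - \<theta>^2" and x: "0 \<le> x" "x < 1"
  shows "K * (artanh x * artanh (\<theta>*x) + x / (1 - x^2) * artanh (\<theta>*x) + x * artanh x * (\<theta> / (1 - (\<theta>*x)^2)))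
         \<le> \<theta> / (1 - x^2) - \<theta> / (1 - (\<theta>*x)^2)"
proof -
  have "\<theta>*x \<le> x" using \<theta> x by (intro mult_left_le_one_le)
  hence \<theta>x: "0 \<le> \<theta>*x" "\<theta>*x < 1" using \<theta> x by auto
  define D1 D2 where "D1 = 1 - x^2" and "D2 = 1 - (\<theta>*x)^2"
  have D: "0 < D1" "0 < D2" unfolding D1_def D2_def using x \<theta>x by (simp_all add: abs_square_less_1)
  define p q c where "p = artanh x" and "q = artanh (\<theta>*x)" and "c = x^2 / (D1 * D2)"
  have p: "0 \<le> p" "p \<le> x / D1" unfolding p_def D1_def using artanh_nonneg artanh_le x by auto
  have q: "0 \<le> q" "q \<le> \<theta>*x / D2" unfolding q_def D2_def using artanh_nonneg artanh_le \<theta>x by auto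
  have "p * q \<le> (x / D1) * (\<theta>*x / D2)" using p q by (intro mult_mono) auto
  also have "\<dots> = \<theta> * c" unfolding c_def using D by (simp add: field_simps power2_eq_square)
  finally have b1: "p * q \<le> \<theta> * c" .
  have "x / D1 * q \<le> x / D1 * (\<theta>*x / D2)" using q x D by (intro mult_left_mono) auto
  also have "\<dots> = \<theta> * c" unfolding c_def using D by (simp add: field_simps power2_eq_square)
  finally have b2: "x / D1 * q \<le> \<theta> * c" .
  have "x * p * (\<theta> / D2) \<le> x * (x / D1) * (\<theta> / D2)"
    using p x \<theta> D by (intro mult_right_mono mult_left_mono) auto
  also have "\<dots> = \<theta> * c" unfolding c_def using D by (simp add: field_simps power2_eq_square)
  finally have b3: "x * p * (\<theta> / D2) \<le> \<theta> * c" .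
  have "K * (p * q + x / D1 * q + x * p * (\<theta> / D2)) \<le> K * (3 * (\<theta> * c))"
    using b1 b2 b3 K by (intro mult_left_mono) auto
  also have "\<dots> = (3 * K) * (\<theta> * c)" by simp
  also have "\<dots> \<le> (1 - \<theta>^2) * (\<theta> * c)"
    using K \<theta> D by (intro mult_right_mono) (auto simp: c_def)
  also have "\<dots> = \<theta> / D1 - \<theta> / D2"
    unfolding c_def using D unfolding D1_def D2_def by (simp add: field_simps power2_eq_square)
  finally show ?thesis unfolding p_def q_def D1_def D2_def .
qed

lemma artanh_product_bound:
  fixes \<theta> K t :: real
  assumes \<theta>: "0 \<le> \<theta>" "\<theta> \<le> 1" and K: "0 \<le> K" "3 * K \<le> 1 - \<theta>^2" and t: "0 \<le> t" "t < 1"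
  shows "artanh (\<theta>*t) * (1 + K * t * artanh t) \<le> \<theta> * artanh t"
proof -
  define h where "h x = \<theta> * artanh x - artanh (\<theta>*x) - K * x * artanh x * artanh (\<theta>*x)" for x
  have "h 0 \<le> h t"
  proof (rule DERIV_nonneg_imp_nondecreasing[OF t(1)])
    fix x assume x: "0 \<le> x" "x \<le> t"
    have "\<theta>*x \<le> x" using \<theta> x by (intro mult_left_le_one_le)
    hence "\<bar>x\<bar> < 1" "\<bar>\<theta>*x\<bar> < 1" using \<theta> x t by auto
    have "((\<lambda>x. artanh (\<theta>*x)) has_real_derivative 1 / (1 - (\<theta>*x)^2) * \<theta>) (at x)"
      by (rule DERIV_chain2[where g="\<lambda>x. \<theta>*x", OF artanh_real_has_field_derivative])
         (use \<open>\<bar>\<theta>*x\<bar> < 1\<close> in \<open>auto intro!: derivative_eq_intros\<close>)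
    hence inner: "((\<lambda>x. artanh (\<theta>*x)) has_real_derivative D) (at x)"
      if "D = \<theta> / (1 - (\<theta>*x)^2)" for D
      using that by simp
    have "(h has_real_derivative (\<theta> / (1 - x^2) - \<theta> / (1 - (\<theta>*x)^2)) - K * (artanh x * artanh (\<theta>*x)
            + x / (1 - x^2) * artanh (\<theta>*x) + x * artanh x * (\<theta> / (1 - (\<theta>*x)^2)))) (at x)"
      unfolding h_def[abs_def] using \<open>\<bar>x\<bar> < 1\<close>
      by (auto intro!: derivative_eq_intros inner) (simp add: algebra_simps)
    moreover have "0 \<le> (\<theta> / (1 - x^2) - \<theta> / (1 - (\<theta>*x)^2)) - K * (artanh x * artanh (\<theta>*x)
            + x / (1 - x^2) * artanh (\<theta>*x) + x * artanh x * (\<theta> / (1 - (\<theta>*x)^2)))"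
      using artanh_product_gap[OF \<theta> K, of x] x t by simp
    ultimately show "\<exists>y. (h has_real_derivative y) (at x) \<and> 0 \<le> y" by blast
  qed
  thus ?thesis by (simp add: h_def algebra_simps)
qed

lemma fth_nonneg:
  assumes "0 \<le> \<theta>" "\<theta> < 1" "0 \<le> \<delta>"
  shows "0 \<le> fth \<theta> \<delta>"
proof -
  have "\<theta> * tanh (\<delta>/2) < 1" "0 \<le> \<theta> * tanh (\<delta>/2)"
    using assms tanh_real_lt_1[of "\<delta>/2"] mult_right_le_one_le[of \<theta> "tanh (\<delta>/2)"] by auto
  thus ?thesis unfolding fth_eq_artanh using artanh_nonneg by simp
qed

(* This is the second claim for C1 = 2, C2 = 1. *)
lemma fth_core_bound:
  assumes \<theta>: "0 \<le> \<theta>" "\<theta> \<le> 1" and \<delta>: "0 \<le> \<delta>"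
  shows "fth \<theta> \<delta> * (1 + (1 - \<theta>) / 6 * \<delta> * tanh (\<delta>/2)) \<le> \<theta> * \<delta>"
proof -
  define t where "t = tanh (\<delta>/2)"
  have t: "0 \<le> t" "t < 1" using \<delta> tanh_real_lt_1 by (simp_all add: t_def)
  have artanh_t: "artanh t = \<delta>/2" unfolding t_def artanh_tanh_real ..
  have K: "0 \<le> (1 - \<theta>) / 3" "3 * ((1 - \<theta>) / 3) \<le> 1 - \<theta>^2"
    using \<theta> by (simp_all add: power2_eq_square mult_left_le_one_le)
  have "artanh (\<theta>*t) * (1 + (1 - \<theta>) / 3 * t * artanh t) \<le> \<theta> * artanh t"
    by (rule artanh_product_bound[OF \<theta> K t])
  thus ?thesis unfolding fth_eq_artanh t_def[symmetric] artanh_t by (simp add: field_simps)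
qed

lemma fth_tanh_bound:
  assumes \<theta>: "0 \<le> \<theta>" "\<theta> < 1" and \<delta>: "0 \<le> \<delta>"
  shows "tanh (\<delta>/2) * fth \<theta> \<delta> \<le> 2 * \<theta> / (1 - \<theta>^2)"
proof -
  define t where "t = tanh (\<delta>/2)"
  have t: "0 \<le> t" "t < 1" using \<delta> tanh_real_lt_1 by (simp_all add: t_def)
  have "\<theta>*t \<le> \<theta>" using \<theta> t by (intro mult_right_le_one_le) auto
  hence \<theta>t: "0 \<le> \<theta>*t" "\<theta>*t < 1" using \<theta> t by auto
  have F: "fth \<theta> \<delta> = 2 * artanh (\<theta>*t)" unfolding t_def by (rule fth_eq_artanh)
  have "t * fth \<theta> \<delta> \<le> fth \<theta> \<delta>"
    using t fth_nonneg[OF _ \<theta>(2) \<delta>] \<theta> by (simp add: mult_left_le_one_le)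
  also have "\<dots> \<le> 2 * (\<theta>*t) / (1 - (\<theta>*t)^2)" unfolding F using artanh_le[OF \<theta>t] by simp
  also have "\<dots> \<le> 2 * \<theta> / (1 - \<theta>^2)"
  proof (rule frac_le)
    have "(\<theta>*t)^2 \<le> \<theta>^2" using \<theta>t \<open>\<theta>*t \<le> \<theta>\<close> by (intro power_mono) auto
    thus "1 - \<theta>^2 \<le> 1 - (\<theta>*t)^2" by simp
    show "0 < 1 - \<theta>^2" using \<theta> by (simp add: abs_square_less_1)
  qed (use \<theta> \<open>\<theta>*t \<le> \<theta>\<close> in auto)
  finally show ?thesis unfolding t_def .
qed

lemma weighted_combination:
  fixes F a M r C1 C2 :: real
  assumes base: "F + 2 * a \<le> M" and a: "0 \<le> a" "a \<le> r * M / 2" and M: "0 \<le> M"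
    and C2: "1 \<le> C2" "1 + (C1/2 - 1) * r \<le> C2"
  shows "F + C1 * a \<le> C2 * M"
proof (cases "C1 \<le> 2")
  case True
  have "C1 * a \<le> 2 * a" using True a by (intro mult_right_mono) auto
  moreover have "M \<le> C2 * M" using C2 M by (simp add: mult_le_cancel_right1)
  ultimately show ?thesis using base by linarith
next
  case False
  have "(C1 - 2) * a \<le> (C1 - 2) * (r * M / 2)" using False a by (intro mult_left_mono) auto
  moreover have "(1 + (C1/2 - 1) * r) * M \<le> C2 * M" using C2 M by (intro mult_right_mono) auto
  ultimately show ?thesis using base by (simp add: algebra_simps)
qed

(* For \<theta> <= 3/4 the weight a = (1-\<theta>)/12 \<delta> tanh(\<delta>/2) f(\<delta>) is at most (1-\<theta>^2) \<theta> \<delta> / 2;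
   this uses 3(1+\<theta>)(1-\<theta>^2) >= 1, which holds since 1 - \<theta>^2 >= 7/16. *)
lemma fth_correction_bound:
  assumes \<theta>: "0 < \<theta>" "\<theta> \<le> 3/4" and \<delta>: "0 \<le> \<delta>"
  shows "(1 - \<theta>) / 12 * \<delta> * (tanh (\<delta>/2) * fth \<theta> \<delta>) \<le> (1 - \<theta>^2) * (\<theta> * \<delta>) / 2"
proof -
  have "(1 - \<theta>) / 12 * \<delta> * (tanh (\<delta>/2) * fth \<theta> \<delta>) \<le> (1 - \<theta>) / 12 * \<delta> * (2 * \<theta> / (1 - \<theta>^2))"
    using fth_tanh_bound[of \<theta> \<delta>] \<theta> \<delta> by (intro mult_left_mono) auto
  also have "\<dots> = \<delta> / 12 * ((1 - \<theta>) * (2 * \<theta> / (1 - \<theta>^2)))" by simp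
  also have "(1 - \<theta>) * (2 * \<theta> / (1 - \<theta>^2)) = 2 * \<theta> / (1 + \<theta>)"
  proof -
    have "1 - \<theta>^2 = (1 - \<theta>) * (1 + \<theta>)" by (simp add: algebra_simps power2_eq_square)
    thus ?thesis using \<theta> by simp
  qed
  also have "\<delta> / 12 * (2 * \<theta> / (1 + \<theta>)) = (\<theta> * \<delta>) * (1 / (6 * (1 + \<theta>)))" by simp
  also have "\<dots> \<le> (\<theta> * \<delta>) * ((1 - \<theta>^2) / 2)"
  proof (rule mult_left_mono)
    have "\<theta>^2 \<le> (3/4)^2" using \<theta> by (intro power_mono) auto
    hence "7/16 \<le> 1 - \<theta>^2" by (simp add: power_divide)
    hence "1 \<le> 3 * ((1 + \<theta>) * (1 - \<theta>^2))" using \<theta> mult_mono[of 1 "1 + \<theta>" "7/16" "1 - \<theta>^2"] by simp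
    thus "1 / (6 * (1 + \<theta>)) \<le> (1 - \<theta>^2) / 2" using \<theta> by (simp add: divide_simps algebra_simps)
  qed (use \<theta> \<delta> in simp)
  finally show ?thesis by (simp add: mult.commute)
qed

lemma fth_weighted_bound:
  fixes \<theta> C1 C2 \<delta> :: real
  assumes \<theta>: "0 < \<theta>" "\<theta> \<le> 3/4" and C2: "1 \<le> C2" "1 + (C1/2 - 1) * (1 - \<theta>^2) \<le> C2"
    and \<delta>: "0 < \<delta>"
  shows "fth \<theta> \<delta> * (1 + 4 * (1/48) * (1 - \<theta>) * C1 * \<delta> * tanh (\<delta>/2)) \<le> C2 * \<theta> * \<delta>"
proof -
  define F a where "F = fth \<theta> \<delta>" and "a = (1 - \<theta>) / 12 * \<delta> * (tanh (\<delta>/2) * F)"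
  have "F * (1 + (1 - \<theta>) / 6 * \<delta> * tanh (\<delta>/2)) = F + 2 * a" by (simp add: a_def field_simps)
  hence "F + 2 * a \<le> \<theta> * \<delta>" using fth_core_bound[of \<theta> \<delta>] \<theta> \<delta> by (simp add: F_def)
  moreover have "0 \<le> a"
    using \<theta> \<delta> fth_nonneg[of \<theta> \<delta>] unfolding a_def F_def by (auto intro!: mult_nonneg_nonneg)
  moreover have "a \<le> (1 - \<theta>^2) * (\<theta> * \<delta>) / 2"
    unfolding a_def F_def using fth_correction_bound \<theta> \<delta> by simp
  ultimately have "F + C1 * a \<le> C2 * (\<theta> * \<delta>)"
    using weighted_combination C2 \<theta> \<delta> by simp
  thus ?thesis by (simp add: F_def a_def algebra_simps)
qed

theorem mainTheorem11:
  shows "(\<forall>\<theta>::real. 0 < \<theta> \<and> \<theta> \<le> 3/4 \<longrightarrow>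
            (\<forall>x y::real. \<bar>fth \<theta> x - fth \<theta> y\<bar> \<le> 2 * fth \<theta> (\<bar>x - y\<bar> / 2)))
       \<and> (\<exists>\<kappa>::real. \<kappa> > 1/100 \<and>
            (\<forall>\<theta>::real. 0 < \<theta> \<and> \<theta> \<le> 3/4 \<longrightarrow>
              (\<forall>C1 C2 \<delta>::real. C1 \<ge> 1 \<and> C2 \<ge> 1 \<and> C2 \<ge> 1 + (C1/2 - 1) * (1 - \<theta>^2) \<and> \<delta> > 0 \<longrightarrow>
                 fth \<theta> \<delta> * (1 + 4 * \<kappa> * (1 - \<theta>) * C1 * \<delta> * tanh (\<delta>/2)) \<le> C2 * \<theta> * \<delta>)))"
proof (intro conjI)
  show "\<forall>\<theta>::real. 0 < \<theta> \<and> \<theta> \<le> 3/4 \<longrightarrow>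
          (\<forall>x y::real. \<bar>fth \<theta> x - fth \<theta> y\<bar> \<le> 2 * fth \<theta> (\<bar>x - y\<bar> / 2))"
    using fth_difference_bound by simp
  show "\<exists>\<kappa>::real. \<kappa> > 1/100 \<and>
          (\<forall>\<theta>::real. 0 < \<theta> \<and> \<theta> \<le> 3/4 \<longrightarrow>
            (\<forall>C1 C2 \<delta>::real. C1 \<ge> 1 \<and> C2 \<ge> 1 \<and> C2 \<ge> 1 + (C1/2 - 1) * (1 - \<theta>^2) \<and> \<delta> > 0 \<longrightarrow>
               fth \<theta> \<delta> * (1 + 4 * \<kappa> * (1 - \<theta>) * C1 * \<delta> * tanh (\<delta>/2)) \<le> C2 * \<theta> * \<delta>))"
    by (rule exI[of _ "1/48"]) (use fth_weighted_bound in auto)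
qed

end
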